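(* Let $X_n=(\mathbb{C}^n,\|\cdot\|)$ be a symmetric Banach lattice and $J\subset\Lambda_T(m,n)$ an index set, where $m\le n$. Then $$\widehat{\boldsymbol{\lambda}}\big(\mathcal{P}_J(X_n)\big)\le e^m\Big(\frac{\varphi_{X_n'}(n)}{\varphi_{X_n'}(m)}\Big)^m.$$
   Context: A Banach lattice $X_n=(\mathbb{C}^n,\|\cdot\|)$ is a norm with $\|z\|\le\|w\|$ whenever $|z_k|\le|w_k|$ for all $k$; it is symmetric if $\|(z_{\sigma(k)})\|=\|z\|$ for every permutation $\sigma$. $X_n'$ is the Köthe dual ($\|x\|_{X_n'}=\sup\{\sum|x_ky_k|:\|y\|\le1\}$) and $\varphi_{X_n'}(k)=\|\sum_{j=1}^ke_j\|_{X_n'}$. $\Lambda_T(m,n)$ is the set of $\alpha\in\{0,1\}^n$ with $|\alpha|=m$. $c_{X_n}(\alpha)=1/\sup_{z\in B_{X_n}}|z^\alpha|$ ($B_{X_n}$ the open unit ball), and $\widehat{\boldsymbol{\lambda}}(\mathcal{P}_J(X_n))=\sup_{z\in B_{X_n}}\sum_{\alpha\in J}c_{X_n}(\alpha)|z^\alpha|$. *)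

theory Defs
  imports "HOL-Analysis.Analysis"
begin

text \<open>The space C^n is represented by functions nat => complex that vanish
  outside the index set {..<n}.\<close>

definition vecs :: "nat \<Rightarrow> (nat \<Rightarrow> complex) set" where
  "vecs n = {z. \<forall>k\<ge>n. z k = 0}"

text \<open>N is a lattice norm on C^n (finite-dimensional, hence Banach).\<close>
definition banach_lattice :: "nat \<Rightarrow> ((nat \<Rightarrow> complex) \<Rightarrow> real) \<Rightarrow> bool" where
  "banach_lattice n N \<longleftrightarrow>
     (\<forall>z\<in>vecs n. N z = 0 \<longleftrightarrow> z = (\<lambda>_. 0)) \<and>
     (\<forall>z\<in>vecs n. \<forall>c. N (\<lambda>k. c * z k) = cmod c * N z) \<and>
     (\<forall>z\<in>vecs n. \<forall>w\<in>vecs n. N (\<lambda>k. z k + w k) \<le> N z + N w) \<and>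
     (\<forall>z\<in>vecs n. \<forall>w\<in>vecs n. (\<forall>k<n. cmod (z k) \<le> cmod (w k)) \<longrightarrow> N z \<le> N w)"

definition symmetric_lattice :: "nat \<Rightarrow> ((nat \<Rightarrow> complex) \<Rightarrow> real) \<Rightarrow> bool" where
  "symmetric_lattice n N \<longleftrightarrow> banach_lattice n N \<and>
     (\<forall>\<sigma> z. \<sigma> permutes {..<n} \<longrightarrow> z \<in> vecs n \<longrightarrow> N (z \<circ> \<sigma>) = N z)"

definition kothe_dual :: "nat \<Rightarrow> ((nat \<Rightarrow> complex) \<Rightarrow> real) \<Rightarrow> (nat \<Rightarrow> complex) \<Rightarrow> real" where
  "kothe_dual n N x = (SUP y\<in>{y\<in>vecs n. N y \<le> 1}. \<Sum>k<n. cmod (x k * y k))"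

text \<open>Fundamental function of the dual: phi_{X_n'}(k) = || e_1 + ... + e_k ||_{X_n'}.\<close>
definition fund_dual :: "nat \<Rightarrow> ((nat \<Rightarrow> complex) \<Rightarrow> real) \<Rightarrow> nat \<Rightarrow> real" where
  "fund_dual n N k = kothe_dual n N (\<lambda>j. if j < k then 1 else 0)"

definition Lambda_T :: "nat \<Rightarrow> nat \<Rightarrow> (nat \<Rightarrow> nat) set" where
  "Lambda_T m n = {\<alpha>. (\<forall>k. \<alpha> k \<le> 1) \<and> (\<forall>k\<ge>n. \<alpha> k = 0) \<and> (\<Sum>k<n. \<alpha> k) = m}"

definition monom :: "nat \<Rightarrow> (nat \<Rightarrow> nat) \<Rightarrow> (nat \<Rightarrow> complex) \<Rightarrow> complex" where
  "monom n \<alpha> z = (\<Prod>k<n. z k ^ \<alpha> k)"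

definition open_ball :: "nat \<Rightarrow> ((nat \<Rightarrow> complex) \<Rightarrow> real) \<Rightarrow> (nat \<Rightarrow> complex) set" where
  "open_ball n N = {z\<in>vecs n. N z < 1}"

definition cX :: "nat \<Rightarrow> ((nat \<Rightarrow> complex) \<Rightarrow> real) \<Rightarrow> (nat \<Rightarrow> nat) \<Rightarrow> real" where
  "cX n N \<alpha> = 1 / (SUP z\<in>open_ball n N. cmod (monom n \<alpha> z))"

definition lambda_hat :: "nat \<Rightarrow> ((nat \<Rightarrow> complex) \<Rightarrow> real) \<Rightarrow> (nat \<Rightarrow> nat) set \<Rightarrow> real" where
  "lambda_hat n N J = (SUP z\<in>open_ball n N. \<Sum>\<alpha>\<in>J. cX n N \<alpha> * cmod (monom n \<alpha> z))"

end

theory Submission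
  imports Defs "HOL-Number_Theory.Cong"
begin

(*
  Write P = phi'(n) and Q = phi'(m); both are suprema of partial l1-sums over the closed unit
  ball. For alpha in Lambda_T(m,n) with support S and y in the unit ball, averaging |y| over the
  cyclic rotations of its first m coordinates and then permuting onto S produces, by symmetry and
  the triangle inequality, a vector of norm at most 1 that equals (sum_{k<m} |y_k|)/m on S and 0
  elsewhere. Evaluating z^alpha there gives sup |z^alpha| >= (Q/m)^m, i.e. c(alpha) <= (m/Q)^m.
  On the other hand sum_{alpha in Lambda_T(m,n)} |z^alpha| is the m-th elementary symmetric
  function of the |z_k|, hence at most (sum_k |z_k|)^m / m! <= P^m / m!. Together with
  m^m / m! <= e^m this gives the bound.
*)

section \<open>Elementary symmetric functions\<close>

definition elem_sym :: "'a set \<Rightarrow> ('a \<Rightarrow> real) \<Rightarrow> nat \<Rightarrow> real" where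
  "elem_sym A x m = (\<Sum>S | S \<subseteq> A \<and> card S = m. \<Prod>k\<in>S. x k)"

lemma power_Suc_add_ge:
  fixes p a :: real
  assumes "0 \<le> p" "0 \<le> a"
  shows "p ^ Suc k + real (Suc k) * a * p ^ k \<le> (p + a) ^ Suc k"
proof (induction k)
  case (Suc k)
  have "p ^ Suc (Suc k) + real (Suc (Suc k)) * a * p ^ Suc k
      \<le> (p ^ Suc k + real (Suc k) * a * p ^ k) * (p + a)"
    using assms by (simp add: algebra_simps)
  also have "\<dots> \<le> (p + a) ^ Suc k * (p + a)"
    using Suc assms by (intro mult_right_mono) auto
  finally show ?case
    by (simp add: ac_simps)
qed simp

lemma elem_sym_0 [simp]: "finite A \<Longrightarrow> elem_sym A x 0 = 1"
proof -
  assume "finite A"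
  then have "{S. S \<subseteq> A \<and> card S = 0} = {{}}"
    using finite_subset by fastforce
  then show ?thesis
    by (simp add: elem_sym_def)
qed

lemma elem_sym_empty_Suc [simp]: "elem_sym {} x (Suc k) = 0"
  by (simp add: elem_sym_def)

lemma elem_sym_insert_Suc:
  assumes "finite A" "a \<notin> A"
  shows "elem_sym (insert a A) x (Suc k) = elem_sym A x (Suc k) + x a * elem_sym A x k"
proof -
  let ?C = "\<lambda>j. {S. S \<subseteq> A \<and> card S = j}"
  have split: "{S. S \<subseteq> insert a A \<and> card S = Suc k} = ?C (Suc k) \<union> insert a ` ?C k"
  proof (intro set_eqI iffI)
    fix S assume S: "S \<in> {S. S \<subseteq> insert a A \<and> card S = Suc k}"
    show "S \<in> ?C (Suc k) \<union> insert a ` ?C k"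
    proof (cases "a \<in> S")
      case True
      then have "S = insert a (S - {a})" "S - {a} \<in> ?C k"
        using S assms(1) finite_subset by fastforce+
      then show ?thesis by blast
    qed (use S in auto)
  qed (use assms finite_subset in \<open>auto simp: card_insert_if\<close>)
  have inj: "inj_on (insert a) (?C k)"
    using assms(2) by (intro inj_onI) (metis insert_ident mem_Collect_eq subsetD)
  have "elem_sym (insert a A) x (Suc k)
      = elem_sym A x (Suc k) + (\<Sum>S\<in>insert a ` ?C k. \<Prod>k\<in>S. x k)"
    unfolding elem_sym_def split using assms by (subst sum.union_disjoint) auto
  also have "(\<Sum>S\<in>insert a ` ?C k. \<Prod>k\<in>S. x k) = (\<Sum>S\<in>?C k. x a * (\<Prod>k\<in>S. x k))"
    using inj assms by (simp add: sum.reindex) (intro sum.cong refl prod.insert; auto intro: finite_subset)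
  finally show ?thesis
    by (simp add: elem_sym_def sum_distrib_left)
qed

lemma fact_mult_elem_sym_le:
  assumes "finite A" "\<And>k. 0 \<le> x k"
  shows "fact m * elem_sym A x m \<le> (\<Sum>k\<in>A. x k) ^ m"
  using assms(1)
proof (induction A arbitrary: m rule: finite_induct)
  case empty
  then show ?case by (cases m) auto
next
  case (insert a A)
  show ?case
  proof (cases m)
    case (Suc k)
    let ?p = "\<Sum>k\<in>A. x k"
    have "fact m * elem_sym (insert a A) x m
        = fact (Suc k) * elem_sym A x (Suc k) + real (Suc k) * x a * (fact k * elem_sym A x k)"
      using insert Suc by (simp add: elem_sym_insert_Suc algebra_simps)
    also have "\<dots> \<le> ?p ^ Suc k + real (Suc k) * x a * ?p ^ k"
      using insert.IH[of "Suc k"] insert.IH[of k] assms(2)[of a] by (intro add_mono mult_left_mono) auto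
    also have "\<dots> \<le> (?p + x a) ^ Suc k"
      using assms(2) by (intro power_Suc_add_ge sum_nonneg) auto
    finally show ?thesis
      using insert Suc by (simp add: add.commute)
  qed (use insert in simp)
qed

lemma power_div_fact_le_exp:
  fixes x :: real
  assumes "0 \<le> x"
  shows "x ^ m / fact m \<le> exp x"
proof -
  have "(\<lambda>k. x ^ k / fact k) sums exp x"
    using exp_converges[of x] by (simp add: divide_inverse scaleR_conv_of_real mult.commute)
  then show ?thesis
    using sum_le_suminf[OF sums_summable, of _ _ "{m}"] assms sums_unique by fastforce
qed

section \<open>Tetrahedral multi-indices\<close>

lemma bij_betw_indicator_Lambda_T:
  "bij_betw indicator {S. S \<subseteq> {..<n} \<and> card S = m} (Lambda_T m n)"
proof (rule bij_betw_imageI)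
  show "inj_on (indicator :: nat set \<Rightarrow> nat \<Rightarrow> nat) {S. S \<subseteq> {..<n} \<and> card S = m}"
    by (intro inj_onI) (metis indicator_eq_0_iff set_eqI)
  have sum_indicator: "(\<Sum>k<n. indicator S k) = card S" if "S \<subseteq> {..<n}" for S :: "nat set"
    using that by (simp add: sum_indicator_eq_card Int_absorb1 flip: of_nat_eq_iff)
  show "indicator ` {S. S \<subseteq> {..<n} \<and> card S = m} = Lambda_T m n"
  proof (intro set_eqI iffI)
    fix \<alpha> :: "nat \<Rightarrow> nat" assume "\<alpha> \<in> indicator ` {S. S \<subseteq> {..<n} \<and> card S = m}"
    then show "\<alpha> \<in> Lambda_T m n"
      by (auto simp: Lambda_T_def indicator_def sum_indicator Int_absorb1)
  next
    fix \<alpha> :: "nat \<Rightarrow> nat" assume \<alpha>: "\<alpha> \<in> Lambda_T m n"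
    let ?S = "{k. \<alpha> k = 1}"
    have "\<alpha> = indicator ?S"
      using \<alpha> by (force simp: Lambda_T_def indicator_def le_Suc_eq)
    moreover have "?S \<subseteq> {..<n}"
      using \<alpha> by (auto simp: Lambda_T_def not_less[symmetric])
    ultimately show "\<alpha> \<in> indicator ` {S. S \<subseteq> {..<n} \<and> card S = m}"
      using \<alpha> sum_indicator[of ?S] unfolding Lambda_T_def by (intro image_eqI) auto
  qed
qed

lemma finite_Lambda_T: "finite (Lambda_T m n)"
  using bij_betw_finite[OF bij_betw_indicator_Lambda_T] by auto

lemma Lambda_T_obtain_support:
  assumes "\<alpha> \<in> Lambda_T m n"
  obtains S where "S \<subseteq> {..<n}" "card S = m" "\<alpha> = indicator S"
  using assms bij_betw_indicator_Lambda_T[of n m] by (auto simp: bij_betw_def)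

lemma monom_indicator: "S \<subseteq> {..<n} \<Longrightarrow> monom n (indicator S) z = (\<Prod>k\<in>S. z k)"
proof -
  assume "S \<subseteq> {..<n}"
  have "monom n (indicator S) z = (\<Prod>k<n. if k \<in> S then z k else 1)"
    unfolding monom_def by (intro prod.cong) (auto simp: indicator_def)
  also have "\<dots> = (\<Prod>k\<in>S. z k)"
    using \<open>S \<subseteq> {..<n}\<close> by (simp add: prod.If_cases Int_absorb1)
  finally show ?thesis .
qed

lemma monom_scale: "monom n \<alpha> (\<lambda>k. c * z k) = c ^ (\<Sum>k<n. \<alpha> k) * monom n \<alpha> z"
  by (simp add: monom_def power_mult_distrib prod.distrib power_sum)

lemma sum_norm_monom_Lambda_T:
  "(\<Sum>\<alpha>\<in>Lambda_T m n. cmod (monom n \<alpha> z)) = elem_sym {..<n} (\<lambda>k. cmod (z k)) m"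
  unfolding elem_sym_def
  by (simp add: sum.reindex_bij_betw[OF bij_betw_indicator_Lambda_T, symmetric]
      monom_indicator prod_norm)

lemma Lambda_T_imp_le: "\<alpha> \<in> Lambda_T m n \<Longrightarrow> m \<le> n"
  unfolding Lambda_T_def using sum_mono[of "{..<n}" \<alpha> "\<lambda>_. 1"] by auto

section \<open>Lattice norms and the dual fundamental function\<close>

definition unit_ball :: "nat \<Rightarrow> ((nat \<Rightarrow> complex) \<Rightarrow> real) \<Rightarrow> (nat \<Rightarrow> complex) set" where
  "unit_ball n N = {y \<in> vecs n. N y \<le> 1}"

lemma open_ball_subset_unit_ball: "open_ball n N \<subseteq> unit_ball n N"
  by (auto simp: open_ball_def unit_ball_def)

lemma vecs_sum: "(\<And>i. i \<in> I \<Longrightarrow> v i \<in> vecs n) \<Longrightarrow> (\<lambda>k. \<Sum>i\<in>I. v i k) \<in> vecs n"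
  by (auto simp: vecs_def intro!: sum.neutral)

lemma fund_dual_eq_SUP:
  assumes "m \<le> n"
  shows "fund_dual n N m = (SUP y\<in>unit_ball n N. \<Sum>k<m. cmod (y k))"
proof -
  have "(\<Sum>k<n. cmod ((if k < m then 1 else 0) * y k)) = (\<Sum>k<m. cmod (y k))" for y :: "nat \<Rightarrow> complex"
  proof -
    have "(\<Sum>k<n. cmod ((if k < m then 1 else 0) * y k)) = (\<Sum>k<n. if k < m then cmod (y k) else 0)"
      by (intro sum.cong) auto
    also have "\<dots> = (\<Sum>k\<in>{k\<in>{..<n}. k < m}. cmod (y k))"
      by (simp add: sum.inter_filter[symmetric])
    also have "{k\<in>{..<n}. k < m} = {..<m}"
      using assms by auto
    finally show ?thesis .
  qed
  then show ?thesis
    by (simp add: fund_dual_def kothe_dual_def unit_ball_def)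
qed

context
  fixes n :: nat and N :: "(nat \<Rightarrow> complex) \<Rightarrow> real"
  assumes lattice: "banach_lattice n N"
begin

lemma lattice_norm_mono:
  "z \<in> vecs n \<Longrightarrow> w \<in> vecs n \<Longrightarrow> (\<And>k. k < n \<Longrightarrow> cmod (z k) \<le> cmod (w k)) \<Longrightarrow> N z \<le> N w"
  using lattice unfolding banach_lattice_def by blast

lemma lattice_norm_scale: "z \<in> vecs n \<Longrightarrow> N (\<lambda>k. c * z k) = cmod c * N z"
  using lattice unfolding banach_lattice_def by blast

lemma lattice_norm_zero: "N (\<lambda>_. 0) = 0"
proof -
  have "(\<lambda>_. 0) \<in> vecs n"
    by (simp add: vecs_def)
  then show ?thesis
    using lattice unfolding banach_lattice_def by blast
qed

lemma lattice_norm_nonneg: "z \<in> vecs n \<Longrightarrow> 0 \<le> N z"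
  using lattice_norm_mono[of "\<lambda>_. 0" z] lattice_norm_zero by (simp add: vecs_def)

lemma lattice_norm_sum:
  assumes "finite I" "\<And>i. i \<in> I \<Longrightarrow> v i \<in> vecs n"
  shows "N (\<lambda>k. \<Sum>i\<in>I. v i k) \<le> (\<Sum>i\<in>I. N (v i))"
  using assms
proof (induction I rule: finite_induct)
  case (insert a I)
  then have "N (\<lambda>k. v a k + (\<Sum>i\<in>I. v i k)) \<le> N (v a) + N (\<lambda>k. \<Sum>i\<in>I. v i k)"
    using lattice unfolding banach_lattice_def by (simp add: vecs_sum)
  with insert show ?case
    by simp
qed (simp add: lattice_norm_zero)

lemma zero_in_open_ball: "(\<lambda>_. 0) \<in> open_ball n N"
  by (simp add: open_ball_def vecs_def lattice_norm_zero)

lemma lattice_norm_unit_vector_pos: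
  assumes "k < n"
  shows "0 < N (indicator {k})"
proof -
  have "indicator {k} \<in> vecs n" "indicator {k} \<noteq> (\<lambda>_. 0 :: complex)"
    using assms by (auto simp: vecs_def fun_eq_iff intro!: exI[of _ k])
  moreover have "0 \<le> N (indicator {k})"
    using \<open>indicator {k} \<in> vecs n\<close> by (rule lattice_norm_nonneg)
  ultimately show ?thesis
    using lattice unfolding banach_lattice_def by (metis order_le_less)
qed

lemma norm_coord_le:
  assumes "z \<in> unit_ball n N"
  shows "cmod (z k) \<le> (\<Sum>j<n. 1 / N (indicator {j}))"
proof (cases "k < n")
  case True
  have "cmod (z k) * N (indicator {k}) = N (\<lambda>j. z k * indicator {k} j)"
    using True by (simp add: lattice_norm_scale vecs_def)
  also have "\<dots> \<le> N z"
    using assms by (intro lattice_norm_mono) (auto simp: vecs_def unit_ball_def indicator_def)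
  also have "\<dots> \<le> 1"
    using assms by (simp add: unit_ball_def)
  finally have "cmod (z k) \<le> 1 / N (indicator {k})"
    using lattice_norm_unit_vector_pos[OF True] by (simp add: field_simps)
  also have "\<dots> \<le> (\<Sum>j<n. 1 / N (indicator {j}))"
    using True lattice_norm_unit_vector_pos by (intro member_le_sum) (auto intro: less_imp_le)
  finally show ?thesis .
next
  case False
  then show ?thesis
    using assms lattice_norm_unit_vector_pos
    by (auto simp: unit_ball_def vecs_def intro!: sum_nonneg intro: less_imp_le)
qed

lemma bdd_above_partial_l1_norm: "bdd_above ((\<lambda>y. \<Sum>k<m. cmod (y k)) ` unit_ball n N)"
proof (rule bdd_aboveI2)
  fix y assume "y \<in> unit_ball n N"
  then have "(\<Sum>k<m. cmod (y k)) \<le> (\<Sum>k<m. \<Sum>j<n. 1 / N (indicator {j}))"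
    by (intro sum_mono norm_coord_le)
  then show "(\<Sum>k<m. cmod (y k)) \<le> m * (\<Sum>j<n. 1 / N (indicator {j}))"
    by simp
qed

lemma zero_in_unit_ball: "(\<lambda>_. 0) \<in> unit_ball n N"
  using zero_in_open_ball open_ball_subset_unit_ball by blast

lemma partial_l1_norm_le_fund_dual:
  "m \<le> n \<Longrightarrow> y \<in> unit_ball n N \<Longrightarrow> (\<Sum>k<m. cmod (y k)) \<le> fund_dual n N m"
  unfolding fund_dual_eq_SUP by (rule cSUP_upper[OF _ bdd_above_partial_l1_norm])

lemma fund_dual_nonneg: "m \<le> n \<Longrightarrow> 0 \<le> fund_dual n N m"
  using partial_l1_norm_le_fund_dual[OF _ zero_in_unit_ball] by simp

lemma fund_dual_pos:
  assumes "0 < m" "m \<le> n"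
  shows "0 < fund_dual n N m"
proof -
  define c where "c = 1 / N (indicator {0})"
  have "0 < N (indicator {0})"
    using assms lattice_norm_unit_vector_pos by simp
  then have c: "0 < c" "c * N (indicator {0}) = 1"
    by (simp_all add: c_def)
  have "(\<lambda>k. of_real c * indicator {0} k) \<in> unit_ball n N"
    using assms c by (simp add: unit_ball_def vecs_def lattice_norm_scale)
  then have "(\<Sum>k<m. cmod (of_real c * indicator {0} k :: complex)) \<le> fund_dual n N m"
    using assms(2) by (rule partial_l1_norm_le_fund_dual[rotated])
  moreover have "(\<Sum>k<m. cmod (of_real c * indicator {0} k :: complex)) = (\<Sum>k<m. if k = 0 then c else 0)"
    using c by (intro sum.cong) (auto simp: indicator_def)
  moreover have "\<dots> = c"
    using assms(1) by simp
  ultimately show ?thesis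
    using c by linarith
qed

lemma fact_mult_sum_norm_monom_le:
  assumes "z \<in> unit_ball n N"
  shows "fact m * (\<Sum>\<alpha>\<in>Lambda_T m n. cmod (monom n \<alpha> z)) \<le> fund_dual n N n ^ m"
proof -
  have "fact m * (\<Sum>\<alpha>\<in>Lambda_T m n. cmod (monom n \<alpha> z)) \<le> (\<Sum>k<n. cmod (z k)) ^ m"
    unfolding sum_norm_monom_Lambda_T by (rule fact_mult_elem_sym_le) auto
  also have "\<dots> \<le> fund_dual n N n ^ m"
    using partial_l1_norm_le_fund_dual[OF order.refl assms] by (intro power_mono sum_nonneg) auto
  finally show ?thesis .
qed

lemma bdd_above_norm_monom:
  assumes "\<alpha> \<in> Lambda_T m n"
  shows "bdd_above ((\<lambda>z. cmod (monom n \<alpha> z)) ` open_ball n N)"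
proof (rule bdd_aboveI2)
  fix z assume "z \<in> open_ball n N"
  then have z: "z \<in> unit_ball n N"
    using open_ball_subset_unit_ball by blast
  have "cmod (monom n \<alpha> z) \<le> (\<Sum>\<alpha>\<in>Lambda_T m n. cmod (monom n \<alpha> z))"
    using assms finite_Lambda_T by (intro member_le_sum) auto
  also have "\<dots> \<le> fact m * (\<Sum>\<alpha>\<in>Lambda_T m n. cmod (monom n \<alpha> z))"
    using mult_right_mono[of 1 "fact m" "\<Sum>\<alpha>\<in>Lambda_T m n. cmod (monom n \<alpha> z)"]
    by (simp add: sum_nonneg)
  also have "\<dots> \<le> fund_dual n N n ^ m"
    using z by (rule fact_mult_sum_norm_monom_le)
  finally show "cmod (monom n \<alpha> z) \<le> fund_dual n N n ^ m" .
qed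

lemma norm_monom_le_SUP_open_ball:
  assumes "\<alpha> \<in> Lambda_T m n" "z \<in> unit_ball n N"
  shows "cmod (monom n \<alpha> z) \<le> (SUP w\<in>open_ball n N. cmod (monom n \<alpha> w))"
proof (rule tendsto_upperbound[OF _ _ trivial_limit_at_left_real])
  have "((\<lambda>t. t ^ m * cmod (monom n \<alpha> z)) \<longlongrightarrow> 1 ^ m * cmod (monom n \<alpha> z)) (at_left (1::real))"
    by (intro tendsto_intros)
  then show "((\<lambda>t. t ^ m * cmod (monom n \<alpha> z)) \<longlongrightarrow> cmod (monom n \<alpha> z)) (at_left 1)"
    by simp
  have "t ^ m * cmod (monom n \<alpha> z) \<le> (SUP w\<in>open_ball n N. cmod (monom n \<alpha> w))"
    if t: "t \<in> {0<..<1}" for t :: real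
  proof -
    have "N (\<lambda>k. of_real t * z k) = t * N z"
      using t assms(2) by (simp add: lattice_norm_scale unit_ball_def)
    also have "\<dots> \<le> t"
      using t assms(2) by (intro mult_left_le) (auto simp: unit_ball_def)
    also have "\<dots> < 1"
      using t by simp
    finally have "(\<lambda>k. of_real t * z k) \<in> open_ball n N"
      using assms(2) by (simp add: open_ball_def unit_ball_def vecs_def)
    moreover have "cmod (monom n \<alpha> (\<lambda>k. of_real t * z k)) = t ^ m * cmod (monom n \<alpha> z)"
      using t assms(1) by (simp add: monom_scale Lambda_T_def norm_mult norm_power)
    ultimately show ?thesis
      by (metis bdd_above_norm_monom[OF assms(1)] cSUP_upper)
  qed
  then show "\<forall>\<^sub>F t in at_left 1. t ^ m * cmod (monom n \<alpha> z) \<le> (SUP w\<in>open_ball n N. cmod (monom n \<alpha> w))"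
    using eventually_at_left_real[of 0 1] by (auto elim: eventually_mono)
qed

end

section \<open>Symmetric lattices\<close>

lemma bij_betw_rotate:
  assumes "0 < (m::nat)"
  shows "bij_betw (\<lambda>k. (k + i) mod m) {..<m} {..<m}"
proof -
  have "inj_on (\<lambda>k. (k + i) mod m) {..<m}"
  proof (rule inj_onI)
    fix k j assume "k \<in> {..<m}" "j \<in> {..<m}" "(k + i) mod m = (j + i) mod m"
    then have "[k + i = j + i] (mod m)" "k < m" "j < m"
      by (simp_all add: cong_def)
    then show "k = j"
      by (simp add: cong_add_rcancel_nat cong_less_modulus_unique_nat)
  qed
  moreover have "(\<lambda>k. (k + i) mod m) ` {..<m} \<subseteq> {..<m}"
    using assms by auto
  ultimately show ?thesis
    by (simp add: bij_betw_def endo_inj_surj)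
qed

lemma rotate_permutes:
  fixes m n i :: nat
  assumes "0 < m" "m \<le> n"
  shows "(\<lambda>k. if k < m then (k + i) mod m else k) permutes {..<n}"
proof (rule permutes_subset)
  have "bij_betw (\<lambda>k. if k < m then (k + i) mod m else k) {..<m} {..<m}"
    using bij_betw_rotate[OF assms(1)] by (rule bij_betw_cong[THEN iffD1, rotated]) simp
  then show "(\<lambda>k. if k < m then (k + i) mod m else k) permutes {..<m}"
    by (rule bij_imp_permutes) simp
qed (use assms in auto)

lemma permutes_obtain_image:
  assumes "finite A" "B \<subseteq> A" "C \<subseteq> A" "card B = card C"
  obtains \<sigma> where "\<sigma> permutes A" "\<sigma> ` B = C"
proof -
  have fin: "finite B" "finite C"
    using assms finite_subset by auto
  obtain f where f: "bij_betw f B C"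
    using finite_same_card_bij[OF fin assms(4)] by blast
  have "card (A - B) = card (A - C)"
    using assms fin by (simp add: card_Diff_subset)
  then obtain g where g: "bij_betw g (A - B) (A - C)"
    using finite_same_card_bij[of "A - B" "A - C"] assms(1) by blast
  define \<sigma> where "\<sigma> x = (if x \<in> B then f x else if x \<in> A then g x else x)" for x
  have "bij_betw \<sigma> B C"
    using f by (rule bij_betw_cong[THEN iffD1, rotated]) (simp add: \<sigma>_def)
  moreover have "bij_betw \<sigma> (A - B) (A - C)"
    using g by (rule bij_betw_cong[THEN iffD1, rotated]) (simp add: \<sigma>_def)
  ultimately have "bij_betw \<sigma> (B \<union> (A - B)) (C \<union> (A - C))"
    by (rule bij_betw_combine) blast
  then have "bij_betw \<sigma> A A"
    using assms(2,3) by (simp add: Un_absorb1 Un_Diff_cancel)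
  then have "\<sigma> permutes A"
    using assms(2) by (intro bij_imp_permutes) (auto simp: \<sigma>_def)
  moreover have "\<sigma> ` B = C"
    using \<open>bij_betw \<sigma> B C\<close> by (simp add: bij_betw_def)
  ultimately show ?thesis
    using that by blast
qed

lemma symmetric_lattice_imp_banach_lattice: "symmetric_lattice n N \<Longrightarrow> banach_lattice n N"
  by (simp add: symmetric_lattice_def)

context
  fixes n :: nat and N :: "(nat \<Rightarrow> complex) \<Rightarrow> real"
  assumes symmetric: "symmetric_lattice n N"
begin

lemmas lattice = symmetric_lattice_imp_banach_lattice[OF symmetric]

lemma symmetric_lattice_permute: "\<sigma> permutes {..<n} \<Longrightarrow> z \<in> vecs n \<Longrightarrow> N (z \<circ> \<sigma>) = N z"
  using symmetric by (simp add: symmetric_lattice_def)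

lemma symmetric_lattice_indicator_eq:
  assumes "S \<subseteq> {..<n}" "T \<subseteq> {..<n}" "card S = card T"
  shows "N (\<lambda>k. c * indicator S k) = N (\<lambda>k. c * indicator T k)"
proof -
  obtain \<sigma> where \<sigma>: "\<sigma> permutes {..<n}" "\<sigma> ` T = S"
    using permutes_obtain_image[of "{..<n}" T S] assms by auto
  have "(\<lambda>k. c * indicator S k) \<circ> \<sigma> = (\<lambda>k. c * indicator T k)"
    using \<sigma> inj_image_mem_iff[OF permutes_inj[OF \<sigma>(1)]] by (auto simp: fun_eq_iff indicator_def)
  moreover have "(\<lambda>k. c * indicator S k) \<in> vecs n"
    using assms(1) by (auto simp: vecs_def indicator_def)
  ultimately show ?thesis
    using symmetric_lattice_permute[OF \<sigma>(1)] by metis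
qed

lemma symmetric_lattice_average_le:
  assumes "0 < m" "m \<le> n" "y \<in> vecs n"
  shows "N (\<lambda>k. of_real ((\<Sum>j<m. cmod (y j)) / m) * indicator {..<m} k) \<le> N y"
proof -
  define w where "w k = (if k < m then complex_of_real (cmod (y k)) else 0)" for k
  define \<rho> where "\<rho> i k = (if k < m then (k + i) mod m else k)" for i k :: nat
  have w: "w \<in> vecs n"
    using assms by (auto simp: vecs_def w_def)
  have rotated: "w \<circ> \<rho> i \<in> vecs n" "N (w \<circ> \<rho> i) = N w" for i
  proof -
    show "w \<circ> \<rho> i \<in> vecs n"
      using assms(2) by (auto simp: vecs_def w_def \<rho>_def)
    show "N (w \<circ> \<rho> i) = N w"
      unfolding \<rho>_def using w by (rule symmetric_lattice_permute[OF rotate_permutes[OF assms(1,2)]])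
  qed
  have average: "(\<lambda>k. of_real ((\<Sum>j<m. cmod (y j)) / m) * indicator {..<m} k)
      = (\<lambda>k. of_real (1 / m) * (\<Sum>i<m. (w \<circ> \<rho> i) k))"
  proof
    fix k
    show "of_real ((\<Sum>j<m. cmod (y j)) / m) * indicator {..<m} k
        = of_real (1 / m) * (\<Sum>i<m. (w \<circ> \<rho> i) k)"
    proof (cases "k < m")
      case True
      have "(\<Sum>i<m. (w \<circ> \<rho> i) k) = (\<Sum>i<m. w ((i + k) mod m))"
        using True by (simp add: \<rho>_def add.commute)
      also have "\<dots> = (\<Sum>j<m. w j)"
        using sum.reindex_bij_betw[OF bij_betw_rotate[OF assms(1)]] .
      also have "\<dots> = of_real (\<Sum>j<m. cmod (y j))"
        by (simp add: w_def)
      finally have "(\<Sum>i<m. (w \<circ> \<rho> i) k) = of_real (\<Sum>j<m. cmod (y j))" .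
      then show ?thesis
        using True by simp
    qed (simp add: w_def \<rho>_def)
  qed
  have "N (\<lambda>k. of_real (1 / m) * (\<Sum>i<m. (w \<circ> \<rho> i) k)) = N (\<lambda>k. \<Sum>i<m. (w \<circ> \<rho> i) k) / m"
    using lattice_norm_scale[OF lattice vecs_sum, of "{..<m}" "\<lambda>i. w \<circ> \<rho> i" "of_real (1 / m)"] rotated
    by (simp add: norm_divide)
  also have "\<dots> \<le> (\<Sum>i<m. N (w \<circ> \<rho> i)) / m"
    using lattice_norm_sum[OF lattice, of "{..<m}" "\<lambda>i. w \<circ> \<rho> i"] rotated(1)
    by (intro divide_right_mono) auto
  also have "\<dots> = N w"
    using rotated assms(1) by simp
  also have "\<dots> \<le> N y"
    using w assms(3) by (intro lattice_norm_mono[OF lattice]) (auto simp: w_def)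
  finally show ?thesis
    unfolding average .
qed

lemma fund_dual_power_le_SUP_norm_monom:
  assumes \<alpha>: "\<alpha> \<in> Lambda_T m n" and "0 < m"
  shows "(fund_dual n N m / m) ^ m \<le> (SUP z\<in>open_ball n N. cmod (monom n \<alpha> z))" (is "_ \<le> ?M")
proof -
  obtain S where S: "S \<subseteq> {..<n}" "card S = m" "\<alpha> = indicator S"
    using Lambda_T_obtain_support[OF \<alpha>] .
  have mn: "m \<le> n"
    using Lambda_T_imp_le[OF \<alpha>] .
  have "(\<Sum>k<m. cmod (y k)) / m \<le> root m ?M" if y: "y \<in> unit_ball n N" for y
  proof -
    define c where "c = (\<Sum>k<m. cmod (y k)) / m"
    have c: "0 \<le> c"
      by (simp add: c_def sum_nonneg)
    have "N (\<lambda>k. of_real c * indicator S k) = N (\<lambda>k. of_real c * indicator {..<m} k)"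
      using S mn by (intro symmetric_lattice_indicator_eq) auto
    also have "\<dots> \<le> N y"
      unfolding c_def using y by (intro symmetric_lattice_average_le[OF \<open>0 < m\<close> mn])
        (simp add: unit_ball_def)
    also have "\<dots> \<le> 1"
      using y by (simp add: unit_ball_def)
    finally have "(\<lambda>k. of_real c * indicator S k) \<in> unit_ball n N"
      using S by (auto simp: unit_ball_def vecs_def indicator_def)
    then have "cmod (monom n \<alpha> (\<lambda>k. of_real c * indicator S k)) \<le> ?M"
      by (rule norm_monom_le_SUP_open_ball[OF lattice \<alpha>])
    moreover have "cmod (monom n \<alpha> (\<lambda>k. of_real c * indicator S k)) = c ^ m"
      using S c by (simp add: monom_indicator norm_power)
    ultimately have "c ^ m \<le> ?M"
      by simp
    then show "c \<le> root m ?M"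
      using c \<open>0 < m\<close> by (metis real_root_le_mono real_root_power_cancel)
  qed
  then have "fund_dual n N m \<le> m * root m ?M"
    unfolding fund_dual_eq_SUP[OF mn] using zero_in_unit_ball[OF lattice] \<open>0 < m\<close>
    by (intro cSUP_least) (auto simp: field_simps)
  then have "(fund_dual n N m / m) ^ m \<le> root m ?M ^ m"
    using fund_dual_nonneg[OF lattice mn] \<open>0 < m\<close> by (intro power_mono) (auto simp: field_simps)
  also have "root m ?M ^ m = ?M"
    using norm_monom_le_SUP_open_ball[OF lattice \<alpha> zero_in_unit_ball[OF lattice]] \<open>0 < m\<close>
    by (intro real_root_pow_pos2) (auto intro: order_trans[OF norm_ge_zero])
  finally show ?thesis .
qed

lemma cX_le:
  assumes \<alpha>: "\<alpha> \<in> Lambda_T m n"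
  shows "cX n N \<alpha> \<le> (m / fund_dual n N m) ^ m"
proof (cases "m = 0")
  case True
  then have "monom n \<alpha> = (\<lambda>_. 1)"
    using \<alpha> by (auto simp: Lambda_T_def monom_def fun_eq_iff)
  moreover have "open_ball n N \<noteq> {}"
    using zero_in_open_ball[OF lattice] by blast
  ultimately show ?thesis
    using True by (simp add: cX_def)
next
  case False
  let ?M = "SUP z\<in>open_ball n N. cmod (monom n \<alpha> z)"
  have pos: "0 < (fund_dual n N m / m) ^ m"
    using False fund_dual_pos[OF lattice _ Lambda_T_imp_le[OF \<alpha>]] by simp
  have le: "(fund_dual n N m / m) ^ m \<le> ?M"
    using fund_dual_power_le_SUP_norm_monom[OF \<alpha>] False by simp
  have "cX n N \<alpha> \<le> 1 / (fund_dual n N m / m) ^ m"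
    unfolding cX_def using divide_left_mono[OF le _ mult_pos_pos[OF less_le_trans[OF pos le] pos]]
    by simp
  then show ?thesis
    by (simp add: power_divide)
qed

end

theorem corollary2p20:
  fixes n m :: nat and N :: "(nat \<Rightarrow> complex) \<Rightarrow> real" and J :: "(nat \<Rightarrow> nat) set"
  assumes "symmetric_lattice n N"
    and "m \<le> n"
    and "J \<subseteq> Lambda_T m n"
  shows "lambda_hat n N J \<le> exp (real m) * (fund_dual n N n / fund_dual n N m) ^ m"
proof -
  note lattice = symmetric_lattice_imp_banach_lattice[OF assms(1)]
  let ?P = "fund_dual n N n" and ?Q = "fund_dual n N m"
  have "(\<Sum>\<alpha>\<in>J. cX n N \<alpha> * cmod (monom n \<alpha> z)) \<le> exp (real m) * (?P / ?Q) ^ m"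
    if z: "z \<in> open_ball n N" for z
  proof -
    have "(\<Sum>\<alpha>\<in>J. cX n N \<alpha> * cmod (monom n \<alpha> z)) \<le> (\<Sum>\<alpha>\<in>J. (m / ?Q) ^ m * cmod (monom n \<alpha> z))"
      using assms(3) cX_le[OF assms(1)] by (intro sum_mono mult_right_mono) auto
    also have "\<dots> \<le> (m / ?Q) ^ m * (\<Sum>\<alpha>\<in>Lambda_T m n. cmod (monom n \<alpha> z))"
      unfolding sum_distrib_left using assms(3) finite_Lambda_T fund_dual_nonneg[OF lattice assms(2)]
      by (intro sum_mono2) auto
    also have "\<dots> \<le> (m / ?Q) ^ m * (?P ^ m / fact m)"
      using fact_mult_sum_norm_monom_le[OF lattice, of z m] z open_ball_subset_unit_ball
        fund_dual_nonneg[OF lattice assms(2)]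
      by (intro mult_left_mono) (auto simp: field_simps)
    also have "\<dots> = (real m ^ m / fact m) * (?P / ?Q) ^ m"
      by (simp add: power_divide)
    also have "\<dots> \<le> exp (real m) * (?P / ?Q) ^ m"
      using fund_dual_nonneg[OF lattice] assms(2)
      by (intro mult_right_mono power_div_fact_le_exp) auto
    finally show ?thesis .
  qed
  then show ?thesis
    unfolding lambda_hat_def using zero_in_open_ball[OF lattice] by (intro cSUP_least) auto
qed

end
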